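(* For each $\otimes\in\{\mathrm{del},\mathrm{add},\mathrm{edit}\}$, $\textsc{RM}^{\otimes}_{\mathrm{undir}}(a)\not\subseteq\mathrm{AC}^0$, i.e. some sentence $\phi=\forall x\,\psi$ with $\psi$ quantifier-free over a binary relation $E$ yields a problem $\textsc{RM}^{\otimes}_{\mathrm{undir}}(\phi)$ not in $\mathrm{AC}^0$.
   Context: An undirected graph is $(V,E)$ with $E\subseteq V\times V$ symmetric (self-loops allowed). For $S\subseteq V\times V$, $\|S\|=|\{\{u,v\}:(u,v)\in S\}|$. For a first-order sentence $\phi$ over $\{E\}$, $\textsc{RM}^{\mathrm{edit}}_{\mathrm{undir}}(\phi)$: given an undirected graph $(V,E)$ and $k\in\mathbb N$, is there $S$ with $\|S\|\le k$ such that $(V,E\triangle S)$ is undirected and satisfies $\phi$; del (resp. add) versions require $S\subseteq E$ (resp. $S\cap E=\emptyset$). $\mathrm{AC}^0$: problems decided by constant-depth polynomial-size unbounded fan-in and/or/not circuit families. *)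

theory Defs
  imports Main
begin

datatype fo =
    EAtom nat nat
  | EqAtom nat nat
  | FNot fo
  | FAnd fo fo
  | FOr fo fo
  | FEx nat fo
  | FAll nat fo

fun sat :: "'a set \<Rightarrow> ('a \<times> 'a) set \<Rightarrow> (nat \<Rightarrow> 'a) \<Rightarrow> fo \<Rightarrow> bool" where
  "sat V E \<sigma> (EAtom i j) = ((\<sigma> i, \<sigma> j) \<in> E)"
| "sat V E \<sigma> (EqAtom i j) = (\<sigma> i = \<sigma> j)"
| "sat V E \<sigma> (FNot \<phi>) = (\<not> sat V E \<sigma> \<phi>)"
| "sat V E \<sigma> (FAnd \<phi> \<psi>) = (sat V E \<sigma> \<phi> \<and> sat V E \<sigma> \<psi>)"
| "sat V E \<sigma> (FOr \<phi> \<psi>) = (sat V E \<sigma> \<phi> \<or> sat V E \<sigma> \<psi>)"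
| "sat V E \<sigma> (FEx x \<phi>) = (\<exists>a\<in>V. sat V E (\<sigma>(x := a)) \<phi>)"
| "sat V E \<sigma> (FAll x \<phi>) = (\<forall>a\<in>V. sat V E (\<sigma>(x := a)) \<phi>)"

fun free_vars :: "fo \<Rightarrow> nat set" where
  "free_vars (EAtom i j) = {i, j}"
| "free_vars (EqAtom i j) = {i, j}"
| "free_vars (FNot \<phi>) = free_vars \<phi>"
| "free_vars (FAnd \<phi> \<psi>) = free_vars \<phi> \<union> free_vars \<psi>"
| "free_vars (FOr \<phi> \<psi>) = free_vars \<phi> \<union> free_vars \<psi>"
| "free_vars (FEx x \<phi>) = free_vars \<phi> - {x}"
| "free_vars (FAll x \<phi>) = free_vars \<phi> - {x}"

fun qfree :: "fo \<Rightarrow> bool" where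
  "qfree (EAtom i j) = True"
| "qfree (EqAtom i j) = True"
| "qfree (FNot \<phi>) = qfree \<phi>"
| "qfree (FAnd \<phi> \<psi>) = (qfree \<phi> \<and> qfree \<psi>)"
| "qfree (FOr \<phi> \<psi>) = (qfree \<phi> \<and> qfree \<psi>)"
| "qfree (FEx x \<phi>) = False"
| "qfree (FAll x \<phi>) = False"

text \<open>A sentence is true in a structure (free variables are absent, so the
  assignment is irrelevant; we fix an arbitrary one).\<close>
definition models :: "'a set \<Rightarrow> ('a \<times> 'a) set \<Rightarrow> fo \<Rightarrow> bool" where
  "models V E \<phi> = sat V E (\<lambda>_. undefined) \<phi>"

definition in_frag_a :: "fo \<Rightarrow> bool" where
  "in_frag_a \<phi> = (\<exists>x \<psi>. \<phi> = FAll x \<psi> \<and> qfree \<psi> \<and> free_vars \<psi> \<subseteq> {x})"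

definition undirected :: "'a set \<Rightarrow> ('a \<times> 'a) set \<Rightarrow> bool" where
  "undirected V E = (E \<subseteq> V \<times> V \<and> sym E)"

definition edge_norm :: "('a \<times> 'a) set \<Rightarrow> nat" where
  "edge_norm S = card {{u, v} | u v. (u, v) \<in> S}"

datatype mode = Del | Add | Edit

definition mode_ok :: "mode \<Rightarrow> ('a \<times> 'a) set \<Rightarrow> ('a \<times> 'a) set \<Rightarrow> bool" where
  "mode_ok m E S = (case m of Del \<Rightarrow> S \<subseteq> E | Add \<Rightarrow> S \<inter> E = {} | Edit \<Rightarrow> True)"

definition RM_undir :: "mode \<Rightarrow> fo \<Rightarrow> 'a set \<Rightarrow> ('a \<times> 'a) set \<Rightarrow> nat \<Rightarrow> bool" where
  "RM_undir m \<phi> V E k =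
     (\<exists>S. S \<subseteq> V \<times> V \<and> edge_norm S \<le> k \<and> mode_ok m E S \<and>
          undirected V ((E - S) \<union> (S - E)) \<and> models V ((E - S) \<union> (S - E)) \<phi>)"

datatype 'v circ = Inp 'v | NotG "'v circ" | AndG "'v circ list" | OrG "'v circ list"

fun ceval :: "('v \<Rightarrow> bool) \<Rightarrow> 'v circ \<Rightarrow> bool" where
  "ceval \<rho> (Inp v) = \<rho> v"
| "ceval \<rho> (NotG c) = (\<not> ceval \<rho> c)"
| "ceval \<rho> (AndG cs) = list_all (ceval \<rho>) cs"
| "ceval \<rho> (OrG cs) = list_ex (ceval \<rho>) cs"

fun csize :: "'v circ \<Rightarrow> nat" where
  "csize (Inp v) = 1"
| "csize (NotG c) = Suc (csize c)"
| "csize (AndG cs) = Suc (sum_list (map csize cs))"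
| "csize (OrG cs) = Suc (sum_list (map csize cs))"

fun cdepth :: "'v circ \<Rightarrow> nat" where
  "cdepth (Inp v) = 0"
| "cdepth (NotG c) = Suc (cdepth c)"
| "cdepth (AndG cs) = Suc (foldr max (map cdepth cs) 0)"
| "cdepth (OrG cs) = Suc (foldr max (map cdepth cs) 0)"

text \<open>Encoding of an instance ({0..<n}, E, k) as bits: adjacency bits Inl (i,j),
  and k in unary threshold form, Inr t true iff t < k (for t < n*n; since
  ||S|| <= n*n always, larger k need not be distinguished).\<close>
definition enc :: "nat \<Rightarrow> (nat \<times> nat) set \<Rightarrow> nat \<Rightarrow> (nat \<times> nat + nat) \<Rightarrow> bool" where
  "enc n E k = (\<lambda>v. case v of
       Inl (i, j) \<Rightarrow> i < n \<and> j < n \<and> (i, j) \<in> E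
     | Inr t \<Rightarrow> t < n * n \<and> t < k)"

text \<open>(Non-uniform) AC0 for a graph problem P (vertex set {0..<n}):
  a family of constant-depth, polynomial-size circuits, one per n.\<close>
definition graph_problem_in_AC0 ::
    "(nat set \<Rightarrow> (nat \<times> nat) set \<Rightarrow> nat \<Rightarrow> bool) \<Rightarrow> bool" where
  "graph_problem_in_AC0 P =
     (\<exists>(C :: nat \<Rightarrow> (nat \<times> nat + nat) circ) d c.
        \<forall>n. cdepth (C n) \<le> d \<and> csize (C n) \<le> c * (n + 1) ^ c \<and>
            (\<forall>E k. undirected {0..<n} E \<longrightarrow>
                   (ceval (enc n E k) (C n) \<longleftrightarrow> P {0..<n} E k)))"

end

(* For deletion take forall x. not E(x,x), for addition and editing forall x. E(x,x). On graphs
   whose only edges are loops, the optimal modification cost is the number of loops that must be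
   removed resp. added, so an AC0 family for the problem computes every threshold |b| <= k of the
   loop pattern b. The Razborov-Smolensky method over GF(3) excludes this: a circuit of depth d and
   size s agrees with a polynomial of degree (2l)^d outside a fraction s/2^l of the inputs; the
   thresholds for k = 0..n combine into a polynomial of twice that degree computing parity on most
   inputs, whereas on any set where a degree D polynomial equals parity every function is a
   polynomial of degree n/2 + D, which bounds the size of that set by 1/2 + O(D/sqrt n) of all
   inputs. *)

theory Submission
  imports Defs "HOL-Library.Numeral_Type" "HOL-Library.FuncSet" "HOL-Real_Asymp.Real_Asymp"
begin

section \<open>Polynomials over GF(3) on the Boolean cube\<close>

text \<open>An input of length \<open>n\<close> is a set \<open>b \<subseteq> {..<n}\<close>; \<open>chi T\<close> is the monomial
  \<open>\<Prod>i\<in>T. x\<^sub>i\<close> in the \<open>\<plusminus>1\<close>-valued variables \<open>x\<^sub>i = (-1)^[i \<in> b]\<close> over GF(3).\<close>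

definition chi :: "nat set \<Rightarrow> nat set \<Rightarrow> 3" where
  "chi T b = (\<Prod>i\<in>T. if i \<in> b then -1 else 1)"

inductive low_deg :: "nat \<Rightarrow> nat \<Rightarrow> (nat set \<Rightarrow> 3) \<Rightarrow> bool" for n where
  low_deg_zero: "low_deg n K (\<lambda>_. 0)"
| low_deg_add_chi:
    "low_deg n K f \<Longrightarrow> T \<subseteq> {..<n} \<Longrightarrow> card T \<le> K \<Longrightarrow> low_deg n K (\<lambda>b. f b + a * chi T b)"
| low_deg_cong: "low_deg n K f \<Longrightarrow> (\<And>b. b \<subseteq> {..<n} \<Longrightarrow> f b = g b) \<Longrightarrow> low_deg n K g"

lemma GF3_cases: "(x::3) = 0 \<or> x = 1 \<or> x = -1"
proof (cases x)
  case (of_int z)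
  then have "z = 0 \<or> z = 1 \<or> z = 2" by auto
  then show ?thesis using of_int by auto
qed

lemma GF3_square_nonzero: "(x::3) \<noteq> 0 \<Longrightarrow> x * x = 1"
  using GF3_cases[of x] by auto

lemma chi_empty [simp]: "chi {} b = 1"
  by (simp add: chi_def)

lemma chi_square: "chi T b * chi T b = 1"
proof -
  have "chi T b * chi T b = (\<Prod>i\<in>T. (if i \<in> b then -1 else 1) * (if i \<in> b then -1 else 1))"
    by (simp add: chi_def prod.distrib)
  also have "\<dots> = (\<Prod>i\<in>T. (1::3))"
    by (rule prod.cong) auto
  finally show ?thesis by simp
qed

lemma chi_mult:
  assumes "finite T" "finite U"
  shows "chi T b * chi U b = chi (T - U \<union> (U - T)) b"
proof -
  have split: "chi A b = chi (A - B) b * chi (A \<inter> B) b" if "finite A" for A B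
    unfolding chi_def using that by (subst prod.union_disjoint[symmetric]) (auto intro: prod.cong)
  have "chi (T - U \<union> (U - T)) b = chi (T - U) b * chi (U - T) b"
    unfolding chi_def by (rule prod.union_disjoint) (use assms in auto)
  moreover have "chi T b * chi U b = chi (T - U) b * chi (U - T) b * (chi (T \<inter> U) b * chi (T \<inter> U) b)"
    using split[OF assms(1), of U] split[OF assms(2), of T] by (simp add: Int_commute ac_simps)
  ultimately show ?thesis by (simp add: chi_square)
qed

lemma chi_lessThan:
  assumes "b \<subseteq> {..<n}"
  shows "chi {..<n} b = 1 + of_bool (odd (card b))"
proof -
  have "chi {..<n} b = (\<Prod>i\<in>{..<n} \<inter> {x. x \<in> b}. -1) * (\<Prod>i\<in>{..<n} \<inter> - {x. x \<in> b}. 1)"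
    unfolding chi_def by (rule prod.If_cases) simp
  also have "{..<n} \<inter> {x. x \<in> b} = b" using assms by auto
  finally have "chi {..<n} b = (-1) ^ card b" by simp
  then show ?thesis by (cases "even (card b)") auto
qed

lemma low_deg_mono: "low_deg n K f \<Longrightarrow> K \<le> K' \<Longrightarrow> low_deg n K' f"
  by (induction rule: low_deg.induct) (auto intro: low_deg.intros)

lemma low_deg_add: "low_deg n K g \<Longrightarrow> low_deg n K f \<Longrightarrow> low_deg n K (\<lambda>b. f b + g b)"
proof (induction rule: low_deg.induct)
  case low_deg_zero then show ?case by simp
next
  case (low_deg_add_chi K g T a)
  then have "low_deg n K (\<lambda>b. (f b + g b) + a * chi T b)" by (auto intro: low_deg.intros)
  then show ?case by (simp add: add.assoc)
next
  case (low_deg_cong K g g')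
  then show ?case by (auto intro: low_deg.low_deg_cong[of n K "\<lambda>b. f b + g b"])
qed

lemma low_deg_scale: "low_deg n K f \<Longrightarrow> low_deg n K (\<lambda>b. c * f b)"
proof (induction rule: low_deg.induct)
  case low_deg_zero then show ?case by (simp add: low_deg.intros)
next
  case (low_deg_add_chi K f T a)
  then have "low_deg n K (\<lambda>b. c * f b + (c * a) * chi T b)" by (auto intro: low_deg.intros)
  then show ?case by (simp add: algebra_simps)
next
  case (low_deg_cong K f g)
  then show ?case by (auto intro: low_deg.low_deg_cong[of n K "\<lambda>b. c * f b"])
qed

lemma low_deg_chi: "T \<subseteq> {..<n} \<Longrightarrow> card T \<le> K \<Longrightarrow> low_deg n K (chi T)"
  using low_deg_add_chi[OF low_deg_zero, of T n K 1] by simp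

lemma low_deg_const: "low_deg n K (\<lambda>_. c)"
  using low_deg_scale[OF low_deg_chi[of "{}" n K], of c] by simp

lemma low_deg_one_minus: "low_deg n K f \<Longrightarrow> low_deg n K (\<lambda>b. 1 - f b)"
  using low_deg_add[OF low_deg_scale[of n K f "-1"] low_deg_const[of n K 1]] by simp

lemma low_deg_var: "low_deg n 1 (\<lambda>b. of_bool (i \<in> b))"
proof (cases "i < n")
  case True
  have "low_deg n 1 (\<lambda>b. 1 * chi {i} b + (-1) * chi {} b)"
    using True by (intro low_deg_add low_deg_scale low_deg_chi) auto
  moreover have "1 * chi {i} b + (-1) * chi {} b = of_bool (i \<in> b)" for b
    by (simp add: chi_def)
  ultimately show ?thesis by simp
next
  case False
  show ?thesis by (rule low_deg_cong[OF low_deg_zero]) (use False in auto)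
qed

lemma low_deg_mult_chi:
  "low_deg n K f \<Longrightarrow> U \<subseteq> {..<n} \<Longrightarrow> low_deg n (K + card U) (\<lambda>b. f b * chi U b)"
proof (induction rule: low_deg.induct)
  case low_deg_zero then show ?case by (simp add: low_deg.intros)
next
  case (low_deg_add_chi K f T a)
  have fin: "finite T" "finite U" using low_deg_add_chi finite_subset by auto
  have "card (T - U \<union> (U - T)) \<le> card (T - U) + card (U - T)" by (rule card_Un_le)
  also have "\<dots> \<le> card T + card U" using fin by (intro add_mono card_mono) auto
  finally have "card (T - U \<union> (U - T)) \<le> K + card U" using low_deg_add_chi by linarith
  then have "low_deg n (K + card U) (\<lambda>b. f b * chi U b + a * chi (T - U \<union> (U - T)) b)"
    using low_deg_add_chi by (intro low_deg.low_deg_add_chi) auto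
  then show ?case using chi_mult[OF fin] by (simp add: algebra_simps)
next
  case (low_deg_cong K f g)
  then show ?case by (auto intro: low_deg.low_deg_cong[of n _ "\<lambda>b. f b * chi U b"])
qed

lemma low_deg_mult: "low_deg n L g \<Longrightarrow> low_deg n K f \<Longrightarrow> low_deg n (K + L) (\<lambda>b. f b * g b)"
proof (induction rule: low_deg.induct)
  case low_deg_zero then show ?case by (simp add: low_deg.intros)
next
  case (low_deg_add_chi L g T a)
  have "low_deg n (K + card T) (\<lambda>b. f b * chi T b)"
    using low_deg_add_chi by (intro low_deg_mult_chi) auto
  then have "low_deg n (K + L) (\<lambda>b. a * (f b * chi T b))"
    using low_deg_add_chi by (intro low_deg_scale) (auto elim: low_deg_mono)
  from low_deg_add[OF this low_deg_add_chi.IH[OF low_deg_add_chi.prems]]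
  show ?case by (simp add: distrib_left mult.left_commute)
next
  case (low_deg_cong L g g')
  then show ?case by (auto intro: low_deg.low_deg_cong[of n _ "\<lambda>b. f b * g b"])
qed

lemma low_deg_sum:
  "finite A \<Longrightarrow> (\<And>x. x \<in> A \<Longrightarrow> low_deg n K (f x)) \<Longrightarrow> low_deg n K (\<lambda>b. \<Sum>x\<in>A. f x b)"
  by (induction rule: finite_induct) (simp_all add: low_deg_zero low_deg_add)

lemma low_deg_prod:
  "finite A \<Longrightarrow> (\<And>x. x \<in> A \<Longrightarrow> low_deg n K (f x)) \<Longrightarrow>
    low_deg n (K * card A) (\<lambda>b. \<Prod>x\<in>A. f x b)"
  by (induction rule: finite_induct) (simp_all add: low_deg_const low_deg_mult)

lemma low_deg_point_indicator:
  assumes "a \<subseteq> {..<n}"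
  shows "low_deg n n (\<lambda>b. of_bool (b = a))"
proof -
  define lit :: "nat \<Rightarrow> nat set \<Rightarrow> 3" where "lit i b = (if i \<in> a then of_bool (i \<in> b) else 1 - of_bool (i \<in> b))" for i b
  have "low_deg n (1 * card {..<n}) (\<lambda>b. \<Prod>i<n. lit i b)"
  proof (rule low_deg_prod)
    show "low_deg n 1 (lit i)" for i
      using low_deg_var[of n i] low_deg_one_minus[OF low_deg_var[of n i]]
      by (cases "i \<in> a") (simp_all add: lit_def[abs_def])
  qed simp
  then have "low_deg n n (\<lambda>b. \<Prod>i<n. lit i b)" by simp
  then show ?thesis
  proof (rule low_deg_cong)
    fix b assume b: "b \<subseteq> {..<n}"
    show "(\<Prod>i<n. lit i b) = of_bool (b = a)"
    proof (cases "b = a")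
      case True
      then show ?thesis by (simp add: lit_def prod.neutral)
    next
      case False
      then obtain i where i: "i < n" "i \<in> a \<longleftrightarrow> i \<notin> b" using assms b by blast
      then have "lit i b = 0" by (auto simp: lit_def)
      then show ?thesis using i False by (auto intro: prod_zero)
    qed
  qed
qed

lemma low_deg_full: "low_deg n n g"
proof -
  have "low_deg n n (\<lambda>b. \<Sum>a\<in>Pow {..<n}. g a * of_bool (b = a))"
    by (intro low_deg_sum low_deg_scale low_deg_point_indicator) auto
  then show ?thesis
    by (rule low_deg_cong) (simp add: of_bool_def if_distrib sum.If_cases)
qed

section \<open>Smolensky's bound for parity\<close>

definition small_sets :: "nat \<Rightarrow> nat \<Rightarrow> nat set set" where
  "small_sets n K = {T. T \<subseteq> {..<n} \<and> card T \<le> K}"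

lemma finite_small_sets: "finite (small_sets n K)"
  unfolding small_sets_def by (rule finite_subset[of _ "Pow {..<n}"]) auto

lemma low_deg_expansion:
  "low_deg n K f \<Longrightarrow> \<exists>c. \<forall>b\<subseteq>{..<n}. f b = (\<Sum>T\<in>small_sets n K. c T * chi T b)"
proof (induction rule: low_deg.induct)
  case low_deg_zero
  show ?case by (intro exI[of _ "\<lambda>_. 0"]) simp
next
  case (low_deg_add_chi K f T a)
  then obtain c where c: "\<forall>b\<subseteq>{..<n}. f b = (\<Sum>U\<in>small_sets n K. c U * chi U b)" by blast
  have T: "T \<in> small_sets n K" using low_deg_add_chi by (simp add: small_sets_def)
  have "f b + a * chi T b = (\<Sum>U\<in>small_sets n K. (c(T := c T + a)) U * chi U b)"
    if "b \<subseteq> {..<n}" for b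
  proof -
    have "(\<Sum>U\<in>small_sets n K. (c(T := c T + a)) U * chi U b)
        = (\<Sum>U\<in>small_sets n K. c U * chi U b + (if U = T then a * chi T b else 0))"
      by (rule sum.cong) (auto simp: algebra_simps)
    also have "\<dots> = (\<Sum>U\<in>small_sets n K. c U * chi U b) + a * chi T b"
      using T finite_small_sets by (simp add: sum.distrib)
    finally show ?thesis using c that by simp
  qed
  then show ?case by blast
next
  case (low_deg_cong K f g)
  then show ?case by metis
qed

text \<open>Where \<open>P\<close> agrees with parity, \<open>1 + P = chi {..<n}\<close>, so there every monomial \<open>chi T\<close>
  of degree \<open>> m\<close> equals \<open>(1 + P) * chi ({..<n} - T)\<close>, of degree \<open>\<le> m + deg P\<close>.\<close>

lemma parity_degree_reduction:
  assumes P: "low_deg (2*m) D P" and G: "G \<subseteq> Pow {..<2*m}"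
    and parity: "\<forall>b\<in>G. P b = of_bool (odd (card b))"
  shows "\<exists>f. low_deg (2*m) (m + D) f \<and> (\<forall>b\<in>G. f b = g b)"
proof -
  define n where "n = 2*m"
  obtain c where c: "\<forall>b\<subseteq>{..<n}. g b = (\<Sum>T\<in>small_sets n n. c T * chi T b)"
    using low_deg_expansion[OF low_deg_full] by blast
  define h where "h T b = (if card T \<le> m then chi T b else (1 + P b) * chi ({..<n} - T) b)" for T b
  have h_low_deg: "low_deg n (m + D) (h T)" if T: "T \<in> small_sets n n" for T
  proof (cases "card T \<le> m")
    case True
    then show ?thesis using T by (auto simp: h_def[abs_def] small_sets_def intro: low_deg_chi)
  next
    case False
    have "T \<subseteq> {..<n}" using T by (simp add: small_sets_def)
    then have "card ({..<n} - T) \<le> m"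
      using False finite_subset[of T "{..<n}"] by (simp add: card_Diff_subset n_def)
    moreover have "low_deg n (D + card ({..<n} - T)) (\<lambda>b. (1 + P b) * chi ({..<n} - T) b)"
      using P unfolding n_def by (intro low_deg_mult_chi low_deg_add low_deg_const) auto
    ultimately show ?thesis
      using False by (auto simp: h_def[abs_def] elim: low_deg_mono)
  qed
  have h_chi: "h T b = chi T b" if T: "T \<in> small_sets n n" and b: "b \<in> G" for T b
  proof (cases "card T \<le> m")
    case False
    have "1 + P b = chi {..<n} b"
      using parity b G chi_lessThan[of b n] by (auto simp: n_def)
    then have "h T b = chi {..<n} b * chi ({..<n} - T) b" using False by (simp add: h_def)
    also have "\<dots> = chi ({..<n} - ({..<n} - T) \<union> ({..<n} - T - {..<n})) b"
      by (rule chi_mult) auto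
    also have "{..<n} - ({..<n} - T) \<union> ({..<n} - T - {..<n}) = T"
      using T by (auto simp: small_sets_def)
    finally show ?thesis .
  qed (simp add: h_def)
  show ?thesis
  proof (intro exI conjI ballI)
    show "low_deg (2*m) (m + D) (\<lambda>b. \<Sum>T\<in>small_sets n n. c T * h T b)"
      unfolding n_def[symmetric] by (intro low_deg_sum low_deg_scale h_low_deg finite_small_sets)
    show "(\<Sum>T\<in>small_sets n n. c T * h T b) = g b" if "b \<in> G" for b
      using that G c h_chi by (simp add: n_def subset_iff)
  qed
qed

lemma card_le_card_small_sets:
  assumes G: "G \<subseteq> Pow {..<n}"
    and interpolate: "\<And>g. \<exists>f. low_deg n K f \<and> (\<forall>b\<in>G. f b = g b)"
  shows "card G \<le> card (small_sets n K)"
proof -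
  define M where "M = small_sets n K"
  define eval where "eval c = restrict (\<lambda>b. \<Sum>T\<in>M. c T * chi T b) G" for c
  have finite_G: "finite G" using G finite_subset by blast
  have "G \<rightarrow>\<^sub>E (UNIV :: 3 set) \<subseteq> eval ` (M \<rightarrow>\<^sub>E UNIV)"
  proof
    fix g :: "nat set \<Rightarrow> 3" assume g: "g \<in> G \<rightarrow>\<^sub>E UNIV"
    obtain f where f: "low_deg n K f" "\<forall>b\<in>G. f b = g b" using interpolate by blast
    obtain c where c: "\<forall>b\<subseteq>{..<n}. f b = (\<Sum>T\<in>M. c T * chi T b)"
      using low_deg_expansion[OF f(1)] unfolding M_def by blast
    have "g = eval (restrict c M)"
    proof
      fix b show "g b = eval (restrict c M) b"
      proof (cases "b \<in> G")
        case True
        then have "b \<subseteq> {..<n}" using G by blast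
        then have "g b = (\<Sum>T\<in>M. c T * chi T b)" using True f(2) c by metis
        then show ?thesis using True by (simp add: eval_def)
      qed (use g in \<open>simp add: eval_def PiE_def extensional_def\<close>)
    qed
    then show "g \<in> eval ` (M \<rightarrow>\<^sub>E UNIV)" by auto
  qed
  then have "card (G \<rightarrow>\<^sub>E (UNIV :: 3 set)) \<le> card (eval ` (M \<rightarrow>\<^sub>E UNIV))"
    by (intro card_mono finite_imageI finite_PiE) (simp_all add: M_def finite_small_sets)
  also have "\<dots> \<le> card (M \<rightarrow>\<^sub>E (UNIV :: 3 set))"
    by (intro card_image_le finite_PiE) (simp_all add: M_def finite_small_sets)
  finally have "3 ^ card G \<le> (3::nat) ^ card M"
    using finite_G by (simp add: card_PiE M_def finite_small_sets)
  then show ?thesis unfolding M_def by (rule power_le_imp_le_exp[rotated]) simp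
qed

lemma central_binomial_Suc:
  "(Suc (Suc (2*m)) choose Suc m) * Suc m = 2 * Suc (2*m) * (2*m choose m)"
proof -
  define c' where "c' = Suc (Suc (2*m)) choose Suc m"
  define c'' where "c'' = Suc (2*m) choose m"
  define c where "c = 2*m choose m"
  have up: "Suc (Suc (2*m)) * c'' = c' * Suc m"
    unfolding c'_def c''_def by (rule Suc_times_binomial_eq)
  have "Suc (2*m) * c = (Suc (2*m) choose Suc m) * Suc m"
    unfolding c_def by (rule Suc_times_binomial_eq)
  also have "Suc (2*m) choose Suc m = c''"
    unfolding c''_def using binomial_symmetric[of "Suc m" "Suc (2*m)"] by simp
  finally have down: "c'' * Suc m = Suc (2*m) * c" ..
  have "c' * Suc m * Suc m = Suc (Suc (2*m)) * (c'' * Suc m)"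
    unfolding up[symmetric] by (simp only: mult.assoc)
  also have "\<dots> = (2 * Suc (2*m) * c) * Suc m"
    unfolding down by simp
  finally have "c' * Suc m * Suc m = 2 * Suc (2*m) * c * Suc m" .
  then have "c' * Suc m = 2 * Suc (2*m) * c" by (subst (asm) mult_cancel2) simp
  then show ?thesis unfolding c'_def c_def .
qed

lemma central_binomial_square_le: "(2*m choose m)^2 * (3*m + 1) \<le> 16^m"
proof (induction m)
  case 0 then show ?case by simp
next
  case (Suc m)
  define c where "c = 2*m choose m"
  define c' where "c' = Suc (Suc (2*m)) choose Suc m"
  have step: "c' * Suc m = 2 * Suc (2*m) * c"
    unfolding c_def c'_def by (rule central_binomial_Suc)
  have "c'^2 * (3*m + 4) * (Suc m)^2 = (c' * Suc m)^2 * (3*m + 4)"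
    by (simp only: power_mult_distrib ac_simps)
  also have "\<dots> = 4 * (2*m + 1)^2 * (3*m + 4) * c^2"
    unfolding step by (simp add: power2_eq_square algebra_simps)
  also have "\<dots> \<le> 16 * (m + 1)^2 * (3*m + 1) * c^2"
    by (intro mult_right_mono) (simp_all add: power2_eq_square algebra_simps)
  also have "\<dots> = 16 * (m + 1)^2 * (c^2 * (3*m + 1))" by (simp only: ac_simps)
  also have "\<dots> \<le> 16 * (m + 1)^2 * 16^m"
    using Suc.IH unfolding c_def by (intro mult_left_mono) auto
  finally have "c'^2 * (3*m + 4) \<le> 16^Suc m" by simp
  moreover have "2 * Suc m = Suc (Suc (2*m))" "3 * Suc m + 1 = 3*m + 4" by simp_all
  ultimately show ?case unfolding c'_def by (simp only:)
qed

lemma card_small_sets_le: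
  "2 * card (small_sets (2*m) (m + D)) \<le> 4^m + 2 * (D + 1) * (2*m choose m)"
proof -
  define n where "n = 2*m"
  define L where "L = {T. T \<subseteq> {..<n} \<and> card T < m}"
  define H where "H = (\<Union>j\<in>{m..m+D}. {T. T \<subseteq> {..<n} \<and> card T = j})"
  have "small_sets n (m + D) \<subseteq> L \<union> H" by (auto simp: small_sets_def L_def H_def not_less)
  moreover have fin_L: "finite L" unfolding L_def by (rule finite_subset[of _ "Pow {..<n}"]) auto
  moreover have "finite H" unfolding H_def by (intro finite_UN_I) auto
  ultimately have "card (small_sets n (m + D)) \<le> card L + card H"
    by (meson card_Un_le card_mono finite_UnI le_trans)
  moreover
  have "2 * card L \<le> 4^m"
  proof -
    have inj: "inj_on (\<lambda>T. {..<n} - T) L" by (rule inj_on_inverseI[where g = "\<lambda>T. {..<n} - T"]) (auto simp: L_def)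
    have "{..<n} - T \<notin> L" if T: "T \<in> L" for T
    proof -
      have "finite T" using T finite_subset[of T "{..<n}"] by (simp add: L_def)
      then have "card ({..<n} - T) = n - card T" using T by (simp add: L_def card_Diff_subset)
      then show ?thesis using T by (auto simp: L_def n_def)
    qed
    then have "L \<inter> (\<lambda>T. {..<n} - T) ` L = {}" by blast
    then have "card L + card ((\<lambda>T. {..<n} - T) ` L) = card (L \<union> (\<lambda>T. {..<n} - T) ` L)"
      using fin_L by (intro card_Un_disjoint[symmetric]) auto
    also have "\<dots> \<le> card (Pow {..<n})" by (intro card_mono) (auto simp: L_def)
    finally show ?thesis using card_image[OF inj] by (simp add: card_Pow n_def power_mult)
  qed
  moreover have "card H \<le> (D + 1) * (2*m choose m)"
  proof -
    have "card H \<le> (\<Sum>j\<in>{m..m+D}. card {T. T \<subseteq> {..<n} \<and> card T = j})"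
      unfolding H_def by (rule card_UN_le) simp
    also have "\<dots> = (\<Sum>j\<in>{m..m+D}. n choose j)" by (simp add: n_subsets)
    also have "\<dots> \<le> (\<Sum>j\<in>{m..m+D}. 2*m choose m)"
      unfolding n_def by (intro sum_mono binomial_maximum')
    finally show ?thesis by simp
  qed
  ultimately show ?thesis unfolding n_def by linarith
qed

theorem parity_agreement_le:
  assumes P: "low_deg (2*m) D P" and m: "16 * (D + 1)^2 \<le> m"
    and G: "G \<subseteq> Pow {..<2*m}" and parity: "\<forall>b\<in>G. P b = of_bool (odd (card b))"
  shows "4 * card G \<le> 3 * 4^m"
proof -
  have "card G \<le> card (small_sets (2*m) (m + D))"
    using G parity_degree_reduction[OF P G parity] by (intro card_le_card_small_sets) auto
  moreover have "4 * (D + 1) * (2*m choose m) \<le> 4^m"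
  proof (rule power2_le_imp_le)
    have "(4 * (D + 1) * (2*m choose m))^2 = 16 * (D + 1)^2 * (2*m choose m)^2"
      by (simp only: power_mult_distrib) simp
    also have "\<dots> \<le> (3*m + 1) * (2*m choose m)^2" using m by (intro mult_right_mono) auto
    also have "\<dots> \<le> 16^m"
      using central_binomial_square_le[of m] by (simp add: mult.commute)
    also have "\<dots> = (4^m)^2" by (simp add: power2_eq_square flip: power_mult_distrib)
    finally show "(4 * (D + 1) * (2*m choose m))^2 \<le> (4^m)^2" .
  qed simp
  ultimately show ?thesis using card_small_sets_le[of m D] by linarith
qed

section \<open>Approximating circuits by polynomials\<close>

lemma card_zero_sum_subsets_le:
  fixes v :: "nat \<Rightarrow> 'a::ab_group_add"
  assumes i0: "i0 < k" "v i0 \<noteq> 0"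
  shows "2 * card {A \<in> Pow {..<k}. sum v A = 0} \<le> 2^k"
proof -
  define Z where "Z = {A \<in> Pow {..<k}. sum v A = 0}"
  define flip where "flip A = (if i0 \<in> A then A - {i0} else insert i0 A)" for A
  have inj: "inj_on flip Z" by (rule inj_on_inverseI[where g = flip]) (auto simp: flip_def)
  have flip_Z: "flip ` Z \<subseteq> Pow {..<k} - Z"
  proof
    fix A' assume "A' \<in> flip ` Z"
    then obtain A where A: "A \<in> Z" "A' = flip A" by blast
    have "finite A" using A finite_subset by (auto simp: Z_def)
    then have "sum v A = (if i0 \<in> A then v i0 + sum v A' else sum v A' - v i0)"
      using A by (auto simp: flip_def sum.remove)
    then have "sum v A' \<noteq> 0" using A i0 by (auto simp: Z_def split: if_splits)
    moreover have "A' \<subseteq> {..<k}" using A i0 by (auto simp: Z_def flip_def)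
    ultimately show "A' \<in> Pow {..<k} - Z" by (simp add: Z_def)
  qed
  have "card Z + card (flip ` Z) = card (Z \<union> flip ` Z)"
    using flip_Z by (intro card_Un_disjoint[symmetric]) (auto simp: Z_def)
  also have "\<dots> \<le> card (Pow {..<k})" using flip_Z by (intro card_mono) (auto simp: Z_def)
  finally show ?thesis using card_image[OF inj] by (simp add: Z_def card_Pow)
qed

text \<open>The probabilistic method, by double counting pairs of an \<open>l\<close>-tuple of subsets and a
  \<open>b\<close> all of whose subset sums vanish.\<close>

lemma exists_subsets_few_zero_sums:
  fixes v :: "'b \<Rightarrow> nat \<Rightarrow> 'a::ab_group_add"
  assumes B: "finite B" and nonzero: "\<And>b. b \<in> B \<Longrightarrow> \<exists>i<k. v b i \<noteq> 0"
  shows "\<exists>S \<in> {..<l} \<rightarrow>\<^sub>E Pow {..<k}. 2^l * card {b \<in> B. \<forall>j<l. sum (v b) (S j) = 0} \<le> card B"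
proof (rule ccontr)
  define Tup where "Tup = {..<l} \<rightarrow>\<^sub>E Pow {..<k}"
  define Z where "Z b = {A \<in> Pow {..<k}. sum (v b) A = 0}" for b
  define bad where "bad S = {b \<in> B. \<forall>j<l. S j \<in> Z b}" for S
  assume "\<not> ?thesis"
  moreover have "{b \<in> B. \<forall>j<l. sum (v b) (S j) = 0} = bad S" if "S \<in> Tup" for S
    using that by (auto simp: Tup_def bad_def Z_def PiE_def Pi_def)
  ultimately have many: "card B < 2^l * card (bad S)" if "S \<in> Tup" for S
    using that by (auto simp: Tup_def not_le)
  have fin_Tup: "finite Tup" and card_Tup: "card Tup = (2^k)^l"
    by (simp_all add: Tup_def finite_PiE card_PiE card_Pow)
  have "card Tup * card B < (\<Sum>S\<in>Tup. 2^l * card (bad S))"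
    using many fin_Tup card_Tup sum_strict_mono[OF fin_Tup, of "\<lambda>_. card B"] by force
  also have "\<dots> = 2^l * (\<Sum>b\<in>B. card {S \<in> Tup. \<forall>j<l. S j \<in> Z b})"
    using sum.swap_restrict[OF fin_Tup B, of "\<lambda>_ _. 1::nat" "\<lambda>S b. \<forall>j<l. S j \<in> Z b"]
    by (simp add: bad_def sum_distrib_left[symmetric])
  also have "\<dots> = (\<Sum>b\<in>B. (2 * card (Z b))^l)"
  proof -
    have "{S \<in> Tup. \<forall>j<l. S j \<in> Z b} = {..<l} \<rightarrow>\<^sub>E Z b" for b
      by (auto simp: Tup_def Z_def PiE_def Pi_def)
    then show ?thesis by (simp add: card_PiE sum_distrib_left power_mult_distrib)
  qed
  also have "\<dots> \<le> (\<Sum>b\<in>B. (2^k)^l)"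
  proof (intro sum_mono power_mono)
    fix b assume "b \<in> B"
    then obtain i where "i < k" "v b i \<noteq> 0" using nonzero by blast
    then show "2 * card (Z b) \<le> 2^k" unfolding Z_def by (rule card_zero_sum_subsets_le)
  qed simp
  finally show False using card_Tup by (simp add: mult.commute)
qed

definition approx_errors :: "nat \<Rightarrow> (nat set \<Rightarrow> 3) \<Rightarrow> (nat set \<Rightarrow> bool) \<Rightarrow> nat set set" where
  "approx_errors n p t = {b \<in> Pow {..<n}. p b \<noteq> of_bool (t b)}"

lemma approx_errors_one_minus:
  "approx_errors n (\<lambda>b. 1 - p b) (\<lambda>b. \<not> t b) = approx_errors n p t"
  by (auto simp: approx_errors_def of_bool_not_iff)

text \<open>Razborov's approximation of an OR of \<open>k\<close> approximated functions: on inputs where all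
  \<open>p i\<close> are correct, \<open>q\<close> fails only if each of the \<open>l\<close> subset sums \<open>\<Sum>i\<in>S j. p i b\<close> is \<open>0\<close>
  although some \<open>p i b = 1\<close>, and some choice of the subsets makes this rare.\<close>

lemma or_approximation:
  fixes t :: "nat \<Rightarrow> nat set \<Rightarrow> bool" and s :: "nat \<Rightarrow> nat"
  assumes approx: "\<And>i. i < k \<Longrightarrow>
    \<exists>p. low_deg n D p \<and> 2^l * card (approx_errors n p (t i)) \<le> s i * 2^n"
  shows "\<exists>q. low_deg n (2*l*D) q \<and>
    2^l * card (approx_errors n q (\<lambda>b. \<exists>i<k. t i b)) \<le> Suc (\<Sum>i<k. s i) * 2^n"
proof -
  obtain p where p: "\<And>i. i < k \<Longrightarrow> low_deg n D (p i)"
    and p_errors: "\<And>i. i < k \<Longrightarrow> 2^l * card (approx_errors n (p i) (t i)) \<le> s i * 2^n"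
    using approx by metis
  define errs where "errs = (\<Union>i<k. approx_errors n (p i) (t i))"
  define B where "B = {b \<in> Pow {..<n} - errs. \<exists>i<k. t i b}"
  have fin_B: "finite B" by (simp add: B_def)
  have "\<exists>i<k. p i b \<noteq> 0" if "b \<in> B" for b
    using that by (fastforce simp: B_def errs_def approx_errors_def)
  then obtain S where S: "S \<in> {..<l} \<rightarrow>\<^sub>E Pow {..<k}"
    and few: "2^l * card {b \<in> B. \<forall>j<l. (\<Sum>i\<in>S j. p i b) = 0} \<le> card B"
    using exists_subsets_few_zero_sums[OF fin_B, where v = "\<lambda>b i. p i b" and l = l] by blast
  have S_sub: "S j \<subseteq> {..<k}" "finite (S j)" if "j < l" for j
    using S that finite_subset by (auto simp: PiE_def Pi_def)
  define q where "q b = 1 - (\<Prod>j<l. 1 - (\<Sum>i\<in>S j. p i b) * (\<Sum>i\<in>S j. p i b))" for b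
  have "low_deg n ((D + D) * card {..<l}) (\<lambda>b. \<Prod>j<l. 1 - (\<Sum>i\<in>S j. p i b) * (\<Sum>i\<in>S j. p i b))"
    using S_sub p by (intro low_deg_prod low_deg_one_minus low_deg_mult low_deg_sum) auto
  then have q: "low_deg n (2*l*D) q"
    unfolding q_def by (intro low_deg_one_minus) (auto elim: low_deg_mono)
  have "approx_errors n q (\<lambda>b. \<exists>i<k. t i b) \<subseteq>
      errs \<union> {b \<in> B. \<forall>j<l. (\<Sum>i\<in>S j. p i b) = 0}"
  proof
    fix b assume b: "b \<in> approx_errors n q (\<lambda>b. \<exists>i<k. t i b)"
    show "b \<in> errs \<union> {b \<in> B. \<forall>j<l. (\<Sum>i\<in>S j. p i b) = 0}"
    proof (rule ccontr)
      assume nb: "\<not> ?thesis"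
      then have correct: "p i b = of_bool (t i b)" if "i < k" for i
        using b that by (auto simp: errs_def approx_errors_def)
      show False
      proof (cases "\<exists>i<k. t i b")
        case False
        then have "(\<Sum>i\<in>S j. p i b) = 0" if "j < l" for j
          using S_sub[OF that] correct by (intro sum.neutral) auto
        then show False using b False by (simp add: approx_errors_def q_def)
      next
        case True
        then obtain j where j: "j < l" "(\<Sum>i\<in>S j. p i b) \<noteq> 0"
          using b nb by (auto simp: B_def approx_errors_def)
        then have "1 - (\<Sum>i\<in>S j. p i b) * (\<Sum>i\<in>S j. p i b) = 0"
          by (simp add: GF3_square_nonzero)
        then have "(\<Prod>j<l. 1 - (\<Sum>i\<in>S j. p i b) * (\<Sum>i\<in>S j. p i b)) = 0"
          using j(1) by (intro prod_zero) auto
        then have "q b = 1" by (simp add: q_def)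
        then show False using b True by (simp add: approx_errors_def)
      qed
    qed
  qed
  then have "card (approx_errors n q (\<lambda>b. \<exists>i<k. t i b)) \<le>
      card errs + card {b \<in> B. \<forall>j<l. (\<Sum>i\<in>S j. p i b) = 0}"
    by (intro order.trans[OF card_mono card_Un_le]) (auto simp: errs_def approx_errors_def fin_B)
  also have "card errs \<le> (\<Sum>i<k. card (approx_errors n (p i) (t i)))"
    unfolding errs_def by (intro card_UN_le) simp
  finally have "2^l * card (approx_errors n q (\<lambda>b. \<exists>i<k. t i b)) \<le>
      2^l * (\<Sum>i<k. card (approx_errors n (p i) (t i))) + 2^l * card {b \<in> B. \<forall>j<l. (\<Sum>i\<in>S j. p i b) = 0}"
    by (simp flip: add_mult_distrib2)
  also have "\<dots> \<le> (\<Sum>i<k. s i) * 2^n + 2^n"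
  proof (rule add_mono)
    show "2^l * (\<Sum>i<k. card (approx_errors n (p i) (t i))) \<le> (\<Sum>i<k. s i) * 2^n"
      unfolding sum_distrib_left sum_distrib_right by (intro sum_mono p_errors) simp
    have "card B \<le> 2^n"
      using card_mono[of "Pow {..<n}" B] by (auto simp: B_def card_Pow)
    then show "2^l * card {b \<in> B. \<forall>j<l. (\<Sum>i\<in>S j. p i b) = 0} \<le> 2^n"
      using few by linarith
  qed
  finally show ?thesis using q by auto
qed

lemma foldr_max_ge: "x \<in> set xs \<Longrightarrow> (x::nat) \<le> foldr max xs 0"
  by (induction xs) auto

lemma or_approximation_list:
  fixes t :: "'v circ \<Rightarrow> nat set \<Rightarrow> bool"
  assumes approx: "\<And>c. c \<in> set cs \<Longrightarrow>
      \<exists>p. low_deg n ((2*l)^cdepth c) p \<and> 2^l * card (approx_errors n p (t c)) \<le> csize c * 2^n"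
    and l: "1 \<le> l"
  shows "\<exists>q. low_deg n ((2*l)^Suc (foldr max (map cdepth cs) 0)) q \<and>
      2^l * card (approx_errors n q (\<lambda>b. \<exists>c\<in>set cs. t c b)) \<le> Suc (sum_list (map csize cs)) * 2^n"
proof -
  define M where "M = foldr max (map cdepth cs) 0"
  have "\<exists>p. low_deg n ((2*l)^M) p \<and> 2^l * card (approx_errors n p (t (cs!i))) \<le> csize (cs!i) * 2^n"
    if "i < length cs" for i
  proof -
    have c: "cs!i \<in> set cs" using that by simp
    have "(2*l)^cdepth (cs!i) \<le> (2*l)^M"
      using l c unfolding M_def by (intro power_increasing foldr_max_ge) auto
    then show ?thesis using approx[OF c] by (metis low_deg_mono)
  qed
  from or_approximation[where t = "\<lambda>i. t (cs!i)" and s = "\<lambda>i. csize (cs!i)", OF this]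
  obtain q where q: "low_deg n (2*l*(2*l)^M) q"
    and q_errors: "2^l * card (approx_errors n q (\<lambda>b. \<exists>i<length cs. t (cs!i) b)) \<le>
      Suc (\<Sum>i<length cs. csize (cs!i)) * 2^n"
    by blast
  have "(\<lambda>b. \<exists>i<length cs. t (cs!i) b) = (\<lambda>b. \<exists>c\<in>set cs. t c b)"
    by (intro ext) (metis in_set_conv_nth)
  moreover have "(\<Sum>i<length cs. csize (cs!i)) = sum_list (map csize cs)"
    by (simp add: sum_list_sum_nth atLeast0LessThan)
  ultimately show ?thesis using q q_errors by (auto simp: M_def)
qed

lemma circuit_approximation:
  fixes C :: "'v circ" and \<sigma> :: "nat set \<Rightarrow> 'v \<Rightarrow> bool"
  assumes inputs: "\<And>v. low_deg n 1 (\<lambda>b. of_bool (\<sigma> b v))" and l: "1 \<le> l"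
  shows "\<exists>p. low_deg n ((2*l)^cdepth C) p \<and>
    2^l * card (approx_errors n p (\<lambda>b. ceval (\<sigma> b) C)) \<le> csize C * 2^n"
proof (induction C)
  case (Inp v)
  have "approx_errors n (\<lambda>b. of_bool (\<sigma> b v)) (\<lambda>b. ceval (\<sigma> b) (Inp v)) = {}"
    by (simp add: approx_errors_def)
  then show ?case using inputs[of v] by auto
next
  case (NotG C)
  then obtain p where p: "low_deg n ((2*l)^cdepth C) p"
    and p_errors: "2^l * card (approx_errors n p (\<lambda>b. ceval (\<sigma> b) C)) \<le> csize C * 2^n" by blast
  have "(2*l)^cdepth C \<le> (2*l)^cdepth (NotG C)"
    using l by (intro power_increasing) auto
  with p have "low_deg n ((2*l)^cdepth (NotG C)) (\<lambda>b. 1 - p b)"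
    by (intro low_deg_one_minus) (rule low_deg_mono)
  moreover have "approx_errors n (\<lambda>b. 1 - p b) (\<lambda>b. ceval (\<sigma> b) (NotG C)) =
      approx_errors n p (\<lambda>b. ceval (\<sigma> b) C)"
    using approx_errors_one_minus[of n p "\<lambda>b. ceval (\<sigma> b) C"] by simp
  ultimately show ?case using p_errors by auto
next
  case (AndG cs)
  have "\<exists>p. low_deg n ((2*l)^cdepth c) p \<and>
      2^l * card (approx_errors n p (\<lambda>b. \<not> ceval (\<sigma> b) c)) \<le> csize c * 2^n"
    if "c \<in> set cs" for c
    using AndG.IH[OF that] approx_errors_one_minus by (metis low_deg_one_minus)
  from or_approximation_list[OF this l]
  obtain q where "low_deg n ((2*l)^cdepth (AndG cs)) q"
    and "2^l * card (approx_errors n q (\<lambda>b. \<exists>c\<in>set cs. \<not> ceval (\<sigma> b) c)) \<le> csize (AndG cs) * 2^n"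
    by auto
  moreover have "approx_errors n (\<lambda>b. 1 - q b) (\<lambda>b. ceval (\<sigma> b) (AndG cs)) =
      approx_errors n q (\<lambda>b. \<exists>c\<in>set cs. \<not> ceval (\<sigma> b) c)"
    using approx_errors_one_minus[of n q "\<lambda>b. \<exists>c\<in>set cs. \<not> ceval (\<sigma> b) c"]
    by (simp add: list_all_iff)
  ultimately show ?case by (metis low_deg_one_minus)
next
  case (OrG cs)
  from or_approximation_list[OF OrG.IH l]
  show ?case by (simp add: list_ex_iff)
qed

section \<open>Circuits for thresholds\<close>

lemma parity_from_thresholds:
  assumes p: "\<And>k. k \<le> n \<Longrightarrow> low_deg n D (p k)"
  shows "\<exists>P. low_deg n (2*D) P \<and> (\<forall>b\<subseteq>{..<n}.
    (\<forall>k\<le>n. p k b = of_bool (card b \<le> k)) \<longrightarrow> P b = of_bool (odd (card b)))"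
proof (intro exI conjI allI impI)
  define J where "J = {j. j \<le> n \<and> odd j}"
  have "finite J" by (simp add: J_def)
  show "low_deg n (2*D) (\<lambda>b. \<Sum>j\<in>J. p j b * (1 - p (j - 1) b))"
  proof (rule low_deg_sum[OF \<open>finite J\<close>])
    fix j assume "j \<in> J"
    then have "j \<le> n" "j - 1 \<le> n" by (auto simp: J_def)
    then have "low_deg n D (p j)" "low_deg n D (\<lambda>b. 1 - p (j - 1) b)"
      by (simp_all add: p low_deg_one_minus)
    then show "low_deg n (2*D) (\<lambda>b. p j b * (1 - p (j - 1) b))"
      unfolding mult_2 by (rule low_deg_mult[rotated])
  qed
  fix b :: "nat set"
  assume b: "b \<subseteq> {..<n}" and thresholds: "\<forall>k\<le>n. p k b = of_bool (card b \<le> k)"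
  have "card b \<le> n" using card_mono[OF _ b] by simp
  have "p j b * (1 - p (j - 1) b) = of_bool (j = card b)" if "j \<in> J" for j
    using that thresholds by (auto simp: J_def elim: oddE)
  then have "(\<Sum>j\<in>J. p j b * (1 - p (j - 1) b)) = (\<Sum>j\<in>J. of_bool (j = card b))"
    by (rule sum.cong[OF refl])
  also have "\<dots> = of_bool (odd (card b))"
    using \<open>finite J\<close> \<open>card b \<le> n\<close> by (simp add: J_def of_bool_def sum.delta')
  finally show "(\<Sum>j\<in>J. p j b * (1 - p (j - 1) b)) = of_bool (odd (card b))" .
qed

lemma exists_exp_ge_poly: "\<exists>l\<ge>1. A * l^e \<le> (2::nat)^l"
proof -
  have "(\<lambda>l::nat. real A * real l ^ e / 2 ^ l) \<longlonglongrightarrow> 0" by real_asymp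
  then have "eventually (\<lambda>l. real A * real l ^ e / 2 ^ l < 1) sequentially"
    by (rule order_tendstoD) simp
  then obtain N where N: "\<And>l. l \<ge> N \<Longrightarrow> real A * real l ^ e / 2 ^ l < 1"
    by (auto simp: eventually_sequentially)
  have "real (A * max N 1 ^ e) < real (2 ^ max N 1)"
    using N[of "max N 1"] by (simp add: field_simps)
  then have "A * max N 1 ^ e \<le> 2 ^ max N 1" by linarith
  then show ?thesis by (intro exI[of _ "max N 1"]) simp
qed

text \<open>With \<open>n = 32 * (2 * (2*l)^d + 1)^2\<close> the summed error bound \<open>(n + 1) * c * (n + 1)^c * 2^(n - l)\<close>
  of the approximations of all thresholds is at most \<open>2^n / 8\<close>.\<close>

lemma exists_approximation_parameter: "\<exists>l\<ge>1. 8*c*(2*(16*(2*(2*l)^d+1)^2)+1)^(c+1) \<le> (2::nat)^l"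
proof -
  obtain l where l: "l \<ge> 1" and le: "(8*c*289^(c+1)*2^(d*2*(c+1))) * l^(d*2*(c+1)) \<le> (2::nat)^l"
    using exists_exp_ge_poly by blast
  have "1 \<le> (2*l)^d" using l by simp
  then have "2*(16*(2*(2*l)^d+1)^2)+1 \<le> 289*((2*l)^d)^2"
    using power_mono[of "2*(2*l)^d+1" "3*(2*l)^d" 2] by (simp add: power_mult_distrib power2_eq_square)
  then have "8*c*(2*(16*(2*(2*l)^d+1)^2)+1)^(c+1) \<le> 8*c*(289*((2*l)^d)^2)^(c+1)"
    by (intro mult_left_mono power_mono) auto
  also have "\<dots> = (8*c*289^(c+1)*2^(d*2*(c+1))) * l^(d*2*(c+1))"
    by (simp only: power_mult_distrib power_mult[symmetric] ac_simps)
  also note le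
  finally show ?thesis using l by blast
qed

theorem no_threshold_circuits:
  fixes C :: "nat \<Rightarrow> 'v circ" and \<sigma> :: "nat \<Rightarrow> nat \<Rightarrow> nat set \<Rightarrow> 'v \<Rightarrow> bool"
  assumes depth: "\<And>N. cdepth (C N) \<le> d" and size: "\<And>N. csize (C N) \<le> c * (N + 1)^c"
    and inputs: "\<And>N k v. low_deg N 1 (\<lambda>b. of_bool (\<sigma> N k b v))"
    and threshold: "\<And>N k b. b \<subseteq> {..<N} \<Longrightarrow> ceval (\<sigma> N k b) (C N) \<longleftrightarrow> card b \<le> k"
  shows False
proof -
  obtain l where l: "1 \<le> l" and l_large: "8*c*(2*(16*(2*(2*l)^d+1)^2)+1)^(c+1) \<le> (2::nat)^l"
    using exists_approximation_parameter by blast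
  define D where "D = (2*l)^d"
  define m where "m = 16 * (2*D + 1)^2"
  define n where "n = 2*m"
  have "\<exists>p. low_deg n D p \<and>
      2^l * card (approx_errors n p (\<lambda>b. card b \<le> k)) \<le> c * (n + 1)^c * 2^n" for k
  proof -
    obtain p where p: "low_deg n ((2*l)^cdepth (C n)) p"
      and p_errors: "2^l * card (approx_errors n p (\<lambda>b. ceval (\<sigma> n k b) (C n))) \<le> csize (C n) * 2^n"
      using circuit_approximation[of n "\<sigma> n k", OF inputs l] by blast
    have "(2*l)^cdepth (C n) \<le> D" unfolding D_def using depth l by (intro power_increasing) auto
    moreover have "approx_errors n p (\<lambda>b. ceval (\<sigma> n k b) (C n)) = approx_errors n p (\<lambda>b. card b \<le> k)"
      using threshold by (auto simp: approx_errors_def)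
    moreover have "csize (C n) * 2^n \<le> c * (n + 1)^c * 2^n" using size by (intro mult_right_mono) auto
    ultimately show ?thesis using p p_errors by (metis low_deg_mono order.trans)
  qed
  then obtain p where p: "\<And>k. low_deg n D (p k)"
    and p_errors: "\<And>k. 2^l * card (approx_errors n (p k) (\<lambda>b. card b \<le> k)) \<le> c * (n + 1)^c * 2^n"
    by metis
  define bad where "bad = (\<Union>k\<le>n. approx_errors n (p k) (\<lambda>b. card b \<le> k))"
  have bad_sub: "bad \<subseteq> Pow {..<n}" by (auto simp: bad_def approx_errors_def)
  have "2^l * (8 * card bad) \<le> 2^l * 2^n"
  proof -
    have "card bad \<le> (\<Sum>k\<le>n. card (approx_errors n (p k) (\<lambda>b. card b \<le> k)))"
      unfolding bad_def by (rule card_UN_le) simp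
    then have "2^l * card bad \<le> (\<Sum>k\<le>n. 2^l * card (approx_errors n (p k) (\<lambda>b. card b \<le> k)))"
      unfolding sum_distrib_left[symmetric] by (rule mult_le_mono2)
    also have "\<dots> \<le> (\<Sum>k\<le>n. c * (n + 1)^c * 2^n)"
      by (intro sum_mono p_errors)
    also have "\<dots> = (n + 1) * (c * (n + 1)^c) * 2^n" by (simp add: algebra_simps)
    finally have "8 * (2^l * card bad) \<le> 8 * ((n + 1) * (c * (n + 1)^c) * 2^n)"
      by (rule mult_le_mono2)
    also have "\<dots> = 8 * ((n + 1) * (c * (n + 1)^c)) * 2^n" by (simp only: mult.assoc)
    also have "8 * ((n + 1) * (c * (n + 1)^c)) = 8 * c * (2*(16*(2*(2*l)^d+1)^2)+1)^(c+1)"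
      by (simp only: n_def m_def D_def power_add power_one_right ac_simps)
    also have "\<dots> * 2^n \<le> 2^l * 2^n"
      using l_large by (rule mult_right_mono) simp
    finally show ?thesis by (simp only: ac_simps)
  qed
  then have small_bad: "8 * card bad \<le> 4^m" by (simp add: n_def power_mult)
  obtain P where P: "low_deg n (2*D) P"
    and parity: "\<And>b. b \<subseteq> {..<n} \<Longrightarrow> b \<notin> bad \<Longrightarrow> P b = of_bool (odd (card b))"
    using parity_from_thresholds[of n D p] p by (auto simp: bad_def approx_errors_def)
  have "4 * card (Pow {..<n} - bad) \<le> 3 * 4^m"
    using P parity unfolding n_def by (intro parity_agreement_le) (auto simp: m_def)
  moreover have "card (Pow {..<n} - bad) + card bad = 4^m"
    using bad_sub card_mono[OF _ bad_sub]
    by (simp add: card_Diff_subset finite_subset card_Pow n_def power_mult)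
  moreover have "(0::nat) < 4^m" by simp
  ultimately show False using small_bad by linarith
qed

section \<open>Modification instances consisting of loops\<close>

definition loop_sentence :: "mode \<Rightarrow> fo" where
  "loop_sentence m = (if m = Del then FAll 0 (FNot (EAtom 0 0)) else FAll 0 (EAtom 0 0))"

definition loop_graph :: "mode \<Rightarrow> nat \<Rightarrow> nat set \<Rightarrow> (nat \<times> nat) set" where
  "loop_graph m N b = (if m = Del then {(i, i) | i. i \<in> b} else {(i, i) | i. i < N \<and> i \<notin> b})"

lemma in_frag_a_loop_sentence: "in_frag_a (loop_sentence m)"
  by (auto simp: in_frag_a_def loop_sentence_def)

lemma undirected_loop_graph: "b \<subseteq> {..<N} \<Longrightarrow> undirected {0..<N} (loop_graph m N b)"
  by (auto simp: undirected_def loop_graph_def sym_def)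

lemma edge_norm_loops: "finite b \<Longrightarrow> edge_norm {(i, i) | i. i \<in> b} = card b"
proof -
  assume "finite b"
  have "{{u, v} | u v. (u, v) \<in> {(i, i) | i. i \<in> b}} = (\<lambda>i. {i}) ` b" by auto
  then show ?thesis by (simp add: edge_norm_def card_image)
qed

lemma card_le_edge_norm:
  assumes "finite S" and "\<forall>i\<in>b. (i, i) \<in> S"
  shows "card b \<le> edge_norm S"
proof -
  have "(\<lambda>i. {i}) ` b \<subseteq> (\<lambda>(u, v). {u, v}) ` S" using assms(2) by force
  moreover have "{{u, v} | u v. (u, v) \<in> S} = (\<lambda>(u, v). {u, v}) ` S" by auto
  ultimately show ?thesis
    using assms(1) by (auto simp: edge_norm_def card_image dest: card_mono[rotated])
qed

lemma RM_undir_loop_graph_iff: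
  assumes b: "b \<subseteq> {..<N}"
  shows "RM_undir m (loop_sentence m) {0..<N} (loop_graph m N b) k \<longleftrightarrow> card b \<le> k"
proof
  assume "RM_undir m (loop_sentence m) {0..<N} (loop_graph m N b) k"
  then obtain S where S: "S \<subseteq> {0..<N} \<times> {0..<N}" "edge_norm S \<le> k"
    and result: "models {0..<N} ((loop_graph m N b - S) \<union> (S - loop_graph m N b)) (loop_sentence m)"
    unfolding RM_undir_def by blast
  have "(i, i) \<in> S" if "i \<in> b" for i
  proof -
    have "i \<in> {0..<N}" using that b by auto
    then show ?thesis using that result[unfolded models_def]
      by (cases "m = Del") (auto simp: loop_sentence_def loop_graph_def)
  qed
  then have "card b \<le> edge_norm S"
    using finite_subset[OF S(1)] by (intro card_le_edge_norm) auto
  then show "card b \<le> k" using S(2) by linarith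
next
  assume k: "card b \<le> k"
  define S where "S = {(i, i) | i. i \<in> b}"
  have "finite b" using b finite_subset by blast
  then have "edge_norm S \<le> k" using k by (simp add: S_def edge_norm_loops)
  moreover have "(loop_graph m N b - S) \<union> (S - loop_graph m N b) =
      (if m = Del then {} else {(i, i) | i. i < N})"
    using b by (auto simp: loop_graph_def S_def)
  ultimately show "RM_undir m (loop_sentence m) {0..<N} (loop_graph m N b) k"
    unfolding RM_undir_def using b
    by (intro exI[of _ S]) (cases m; auto simp: S_def mode_ok_def loop_graph_def loop_sentence_def
      models_def undirected_def sym_def)
qed

lemma low_deg_enc_loop_graph: "low_deg N 1 (\<lambda>b. of_bool (enc N (loop_graph m N b) k v))"
proof (cases v)
  case (Inr t)
  then show ?thesis by (simp add: enc_def low_deg_const)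
next
  case (Inl ij)
  obtain i j where ij: "ij = (i, j)" by fastforce
  show ?thesis
  proof (cases "i = j \<and> i < N")
    case True
    then have "(of_bool (enc N (loop_graph m N b) k v) :: 3) =
        (if m = Del then of_bool (i \<in> b) else 1 - of_bool (i \<in> b))" for b
      using Inl ij by (auto simp: enc_def loop_graph_def)
    then show ?thesis
      using low_deg_var[of N i] low_deg_one_minus[OF low_deg_var[of N i]] by (cases "m = Del") simp_all
  next
    case False
    then have "(\<lambda>b. of_bool (enc N (loop_graph m N b) k v) :: 3) = (\<lambda>_. 0)"
      using Inl ij by (intro ext) (auto simp: enc_def loop_graph_def)
    then show ?thesis by (simp add: low_deg_zero)
  qed
qed

theorem lemma4p4:
  shows "\<forall>m \<in> {Del, Add, Edit}. \<exists>\<phi>. in_frag_a \<phi> \<and>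
           \<not> graph_problem_in_AC0 (RM_undir m \<phi>)"
proof
  fix m :: mode
  show "\<exists>\<phi>. in_frag_a \<phi> \<and> \<not> graph_problem_in_AC0 (RM_undir m \<phi>)"
  proof (intro exI conjI notI)
    show "in_frag_a (loop_sentence m)" by (rule in_frag_a_loop_sentence)
    assume "graph_problem_in_AC0 (RM_undir m (loop_sentence m))"
    then obtain C d c where C: "\<And>N. cdepth (C N) \<le> d \<and> csize (C N) \<le> c * (N + 1)^c \<and>
        (\<forall>E k. undirected {0..<N} E \<longrightarrow>
           (ceval (enc N E k) (C N) \<longleftrightarrow> RM_undir m (loop_sentence m) {0..<N} E k))"
      unfolding graph_problem_in_AC0_def by blast
    show False
    proof (rule no_threshold_circuits[where \<sigma> = "\<lambda>N k b. enc N (loop_graph m N b) k"])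
      show "cdepth (C N) \<le> d" "csize (C N) \<le> c * (N + 1)^c" for N using C by auto
      show "low_deg N 1 (\<lambda>b. of_bool (enc N (loop_graph m N b) k v))" for N k v
        by (rule low_deg_enc_loop_graph)
      show "ceval (enc N (loop_graph m N b) k) (C N) \<longleftrightarrow> card b \<le> k" if "b \<subseteq> {..<N}" for N k b
        using C undirected_loop_graph[OF that] RM_undir_loop_graph_iff[OF that] by blast
    qed
  qed
qed

end
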